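(* Let $g\geq 2$, $h$ and $t$ be integers with $2\leq t\leq \log h/\log g$. Then there exists a partition $\mathbb{N}=W_0\cup\cdots\cup W_{h-1}$ (into pairwise disjoint sets) such that each set $W_r$ ($0\le r\le h-1$) is a union of infinitely many intervals of at least $t$ consecutive integers, and $$A=A_g(W_0)\cup\cdots\cup A_g(W_{h-1})$$ is not a minimal asymptotic basis of order $h$.
   Context: $\mathbb{N}$ denotes the set of all nonnegative integers. For a nonempty $W\subseteq\mathbb{N}$ and an integer $g\ge 2$, $A_g(W)$ is the set of all numbers of the form $\sum_{f\in F}a_f g^f$, where $F$ is a finite nonempty subset of $W$ and $1\le a_f\le g-1$ for each $f\in F$. For $A\subseteq\mathbb{N}$ and $h\ge 2$, let $r_h(A,n)$ be the number of $h$-tuples $(a_1,\dots,a_h)\in A^h$ with $a_1+\cdots+a_h=n$. The set $A$ is an asymptotic basis of order $h$ if $r_h(A,n)\ge 1$ for all sufficiently large integers $n$. An asymptotic basis $A$ of order $h$ is minimal if no proper subset of $A$ is an asymptotic basis of order $h$. *)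

theory Defs
  imports Complex_Main
begin

definition A_g :: "nat \<Rightarrow> nat set \<Rightarrow> nat set" where
  "A_g g W = {(\<Sum>f\<in>F. a f * g ^ f) | F a. finite F \<and> F \<noteq> {} \<and> F \<subseteq> W \<and>
                 (\<forall>f\<in>F. 1 \<le> a f \<and> a f \<le> g - 1)}"

definition rep :: "nat \<Rightarrow> nat set \<Rightarrow> nat \<Rightarrow> nat" where
  "rep h A n = card {xs :: nat list. length xs = h \<and> set xs \<subseteq> A \<and> sum_list xs = n}"

definition asymptotic_basis :: "nat \<Rightarrow> nat set \<Rightarrow> bool" where
  "asymptotic_basis h A \<longleftrightarrow> (\<exists>N. \<forall>n\<ge>N. rep h A n \<ge> 1)"

definition minimal_asymptotic_basis :: "nat \<Rightarrow> nat set \<Rightarrow> bool" where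
  "minimal_asymptotic_basis h A \<longleftrightarrow>
     asymptotic_basis h A \<and> (\<forall>B. B \<subset> A \<longrightarrow> \<not> asymptotic_basis h B)"

definition union_of_long_intervals :: "nat \<Rightarrow> nat set \<Rightarrow> bool" where
  "union_of_long_intervals t W \<longleftrightarrow>
     (\<exists>\<I> :: nat set set. infinite \<I> \<and> \<Union>\<I> = W \<and>
        (\<forall>I\<in>\<I>. \<exists>a l. t \<le> l \<and> I = {a..<a + l}) \<and>
        (\<forall>I\<in>\<I>. \<forall>J\<in>\<I>. I \<noteq> J \<longrightarrow> I \<inter> J = {}))"

end

theory Submission
  imports Defs "HOL-Library.Infinite_Set"
begin

text \<open>Cut the digit positions into blocks of \<open>t\<close> consecutive integers. Blocks 0, 1 and all even
  blocks form \<open>W\<^sub>0\<close>; the odd blocks 3, 5, 7, \<dots> are distributed cyclically among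
  \<open>W\<^sub>1, \<dots>, W\<^sub>h\<^sub>-\<^sub>1\<close>. Sorting the base-\<open>g\<close> digits of \<open>n\<close> by class writes \<open>n\<close> as a sum of at
  most \<open>h\<close> elements of \<open>A\<close>, one per class, and this survives the removal of \<open>1 + g\<close> from \<open>A\<close>:
  the only bad case is that the \<open>W\<^sub>0\<close>-digits of \<open>n\<close> form exactly \<open>1 + g\<close>. Then the rest of
  \<open>n\<close> is \<open>g\<^sup>t S\<close>, where \<open>S\<close> arises by moving every block of nonzero class down onto the
  preceding even block, so \<open>S\<close> has its digits in \<open>W\<^sub>0\<close> above position 1 and
  \<open>n = (1 + g + S) + (g\<^sup>t - 1) S\<close> uses at most \<open>g\<^sup>t \<le> h\<close> summands. Representations with fewer
  than \<open>h\<close> summands are padded by splitting a summand \<open>\<ge> 2\<close> into two elements of \<open>A\<close> that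
  are below \<open>g\<close> or divisible by \<open>g\<close>, hence different from \<open>1 + g\<close>.\<close>

lemma A_gI:
  assumes "finite F" "F \<noteq> {}" "F \<subseteq> W" "\<forall>f\<in>F. 1 \<le> a f \<and> a f < g"
  shows "(\<Sum>f\<in>F. a f * g ^ f) \<in> A_g g W"
proof -
  have "\<forall>f\<in>F. 1 \<le> a f \<and> a f \<le> g - 1" using assms(4) by fastforce
  then show ?thesis unfolding A_g_def using assms(1-3) by blast
qed

lemma A_gE:
  assumes "x \<in> A_g g W"
  obtains F a where "finite F" "F \<noteq> {}" "F \<subseteq> W" "\<forall>f\<in>F. 1 \<le> a f \<and> a f < g"
    and "x = (\<Sum>f\<in>F. a f * g ^ f)"
proof -
  from assms obtain F a where "finite F" "F \<noteq> {}" "F \<subseteq> W" "\<forall>f\<in>F. 1 \<le> a f \<and> a f \<le> g - 1"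
    and "x = (\<Sum>f\<in>F. a f * g ^ f)"
    unfolding A_g_def by blast
  moreover have "\<forall>f\<in>F. 1 \<le> a f \<and> a f < g"
    using \<open>\<forall>f\<in>F. 1 \<le> a f \<and> a f \<le> g - 1\<close> by fastforce
  ultimately show thesis using that by blast
qed

lemma A_g_mono: "V \<subseteq> W \<Longrightarrow> A_g g V \<subseteq> A_g g W"
  unfolding A_g_def by blast

lemma A_g_pos:
  assumes "x \<in> A_g g W"
  shows "0 < x"
proof -
  obtain F a where F: "finite F" "F \<noteq> {}" "\<forall>f\<in>F. 1 \<le> a f \<and> a f < g"
    and x: "x = (\<Sum>f\<in>F. a f * g ^ f)"
    using assms by (rule A_gE)
  obtain f where "f \<in> F" using F(2) by blast
  then have "0 < a f * g ^ f" using F(3) by auto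
  also have "\<dots> \<le> x" unfolding x using F(1) \<open>f \<in> F\<close> by (intro member_le_sum) auto
  finally show ?thesis .
qed

lemma A_g_dvd:
  assumes "x \<in> A_g g W" "0 \<notin> W"
  shows "g dvd x"
proof -
  obtain F a where "finite F" "F \<noteq> {}" "F \<subseteq> W" "\<forall>f\<in>F. 1 \<le> a f \<and> a f < g"
    and x: "x = (\<Sum>f\<in>F. a f * g ^ f)"
    using assms(1) by (rule A_gE)
  have "0 \<notin> F" using \<open>F \<subseteq> W\<close> assms(2) by blast
  then show ?thesis unfolding x by (intro dvd_sum) (metis dvd_mult dvd_power neq0_conv)
qed

lemma monomial_in_A_g: "f \<in> W \<Longrightarrow> 1 \<le> c \<Longrightarrow> c < g \<Longrightarrow> c * g ^ f \<in> A_g g W"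
  using A_gI[of "{f}" W "\<lambda>_. c" g] by simp

lemma one_plus_base_in_A_g:
  assumes "2 \<le> g" "{0, 1} \<subseteq> W"
  shows "1 + g \<in> A_g g W"
  using A_gI[of "{0, 1}" W "\<lambda>_. 1" g] assms by simp

lemma A_g_add:
  assumes "x \<in> A_g g U" "y \<in> A_g g V" "U \<inter> V = {}"
  shows "x + y \<in> A_g g (U \<union> V)"
proof -
  obtain F a where F: "finite F" "F \<noteq> {}" "F \<subseteq> U" "\<forall>f\<in>F. 1 \<le> a f \<and> a f < g"
    and x: "x = (\<Sum>f\<in>F. a f * g ^ f)"
    using assms(1) by (rule A_gE)
  obtain G b where G: "finite G" "G \<subseteq> V" "\<forall>f\<in>G. 1 \<le> b f \<and> b f < g"
    and y: "y = (\<Sum>f\<in>G. b f * g ^ f)"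
    using assms(2) by (rule A_gE)
  define c where "c f = (if f \<in> F then a f else b f)" for f
  have disj: "F \<inter> G = {}" using F(3) G(2) assms(3) by blast
  have "x + y = (\<Sum>f\<in>F. c f * g ^ f) + (\<Sum>f\<in>G. c f * g ^ f)"
    unfolding x y c_def using disj by (auto intro!: sum.cong)
  also have "\<dots> = (\<Sum>f\<in>F \<union> G. c f * g ^ f)"
    using F(1) G(1) disj by (rule sum.union_disjoint[symmetric])
  also have "\<dots> \<in> A_g g (U \<union> V)"
    using F G by (intro A_gI) (auto simp: c_def)
  finally show ?thesis .
qed

lemma A_g_image_plus:
  assumes "y \<in> A_g g ((+) t ` W)"
  shows "\<exists>x\<in>A_g g W. y = g ^ t * x"
proof -
  obtain F a where F: "finite F" "F \<noteq> {}" "F \<subseteq> (+) t ` W" "\<forall>f\<in>F. 1 \<le> a f \<and> a f < g"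
    and y: "y = (\<Sum>f\<in>F. a f * g ^ f)"
    using assms by (rule A_gE)
  then obtain E where E: "E \<subseteq> W" "F = (+) t ` E" by (auto simp: subset_image_iff)
  have "y = (\<Sum>e\<in>E. a (t + e) * g ^ (t + e))"
    unfolding y E(2) by (simp add: sum.reindex)
  also have "\<dots> = g ^ t * (\<Sum>e\<in>E. a (t + e) * g ^ e)"
    by (simp add: sum_distrib_left power_add algebra_simps)
  finally show ?thesis
    using F E by (intro bexI[OF _ A_gI]) (auto simp: finite_image_iff)
qed

lemma digit_sum_in_A_g:
  assumes "finite F" "F \<subseteq> W" "\<forall>i\<in>F. d i < g"
  shows "(\<Sum>i\<in>F. d i * g ^ i) \<in> insert 0 (A_g g W)"
proof -
  define F' where "F' = {i\<in>F. d i \<noteq> 0}"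
  have "(\<Sum>i\<in>F. d i * g ^ i) = (\<Sum>i\<in>F'. d i * g ^ i)"
    unfolding F'_def using assms(1) by (intro sum.mono_neutral_right) auto
  moreover have "F' \<noteq> {} \<Longrightarrow> (\<Sum>i\<in>F'. d i * g ^ i) \<in> A_g g W"
    using assms unfolding F'_def by (intro A_gI) auto
  ultimately show ?thesis by (cases "F' = {}") auto
qed

text \<open>Digit positions \<open>i \<ge> n\<close> can be ignored since \<open>n < g ^ n\<close>.\<close>

definition restrict_digits :: "nat \<Rightarrow> nat set \<Rightarrow> nat \<Rightarrow> nat" where
  "restrict_digits g W n = (\<Sum>i\<in>W \<inter> {..<n}. n div g ^ i mod g * g ^ i)"

lemma sum_digits_eq_mod:
  fixes g n :: nat
  shows "(\<Sum>i<L. n div g ^ i mod g * g ^ i) = n mod g ^ L"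
proof (induction L)
  case (Suc L)
  have "n mod g ^ Suc L = g ^ L * (n div g ^ L mod g) + n mod g ^ L"
    using mod_mult2_eq[of n "g ^ L" g] by (simp add: mult.commute)
  then show ?case using Suc by simp
qed simp

lemma restrict_digits_UNIV:
  assumes "2 \<le> g"
  shows "restrict_digits g UNIV n = n"
proof -
  have "n < 2 ^ n" by simp
  also have "\<dots> \<le> g ^ n" using assms by (simp add: power_mono)
  finally show ?thesis by (simp add: restrict_digits_def sum_digits_eq_mod)
qed

lemma restrict_digits_Un:
  "U \<inter> V = {} \<Longrightarrow> restrict_digits g (U \<union> V) n = restrict_digits g U n + restrict_digits g V n"
  unfolding restrict_digits_def Int_Un_distrib2 by (rule sum.union_disjoint) auto

lemma sum_restrict_digits:
  assumes "finite I" "\<forall>r\<in>I. \<forall>s\<in>I. r \<noteq> s \<longrightarrow> W r \<inter> W s = {}"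
  shows "(\<Sum>r\<in>I. restrict_digits g (W r) n) = restrict_digits g (\<Union>r\<in>I. W r) n"
proof -
  have UN_Int: "(\<Union>r\<in>I. W r) \<inter> {..<n} = (\<Union>r\<in>I. W r \<inter> {..<n})" by blast
  show ?thesis
    unfolding restrict_digits_def UN_Int using assms by (subst sum.UNION_disjoint) auto
qed

lemma restrict_digits_in_A_g:
  "1 \<le> g \<Longrightarrow> restrict_digits g W n \<in> insert 0 (A_g g W)"
  unfolding restrict_digits_def by (intro digit_sum_in_A_g) auto

lemma one_le_rep_iff:
  "1 \<le> rep h A n \<longleftrightarrow> (\<exists>xs. length xs = h \<and> set xs \<subseteq> A \<and> sum_list xs = n)"
proof -
  let ?S = "{xs. length xs = h \<and> set xs \<subseteq> A \<and> sum_list xs = n}"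
  have "?S \<subseteq> {xs. set xs \<subseteq> {..n} \<and> length xs = h}"
    using member_le_sum_list by fastforce
  then have "finite ?S"
    using finite_lists_length_eq[of "{..n}" h] by (rule finite_subset) simp
  then show ?thesis unfolding rep_def by (auto simp: Suc_le_eq card_gt_0_iff)
qed

lemma asymptotic_basis_iff:
  "asymptotic_basis h A \<longleftrightarrow> (\<exists>N. \<forall>n\<ge>N. \<exists>xs. length xs = h \<and> set xs \<subseteq> A \<and> sum_list xs = n)"
  unfolding asymptotic_basis_def one_le_rep_iff ..

lemma extend_sum_list_length:
  assumes split: "\<And>b. b \<in> B \<Longrightarrow> 2 \<le> b \<Longrightarrow> \<exists>x\<in>B. \<exists>y\<in>B. b = x + y"
  shows "set xs \<subseteq> B \<Longrightarrow> length xs \<le> h \<Longrightarrow> h \<le> sum_list xs \<Longrightarrow>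
    \<exists>ys. length ys = h \<and> set ys \<subseteq> B \<and> sum_list ys = sum_list xs"
proof (induction "h - length xs" arbitrary: xs)
  case 0
  then show ?case by auto
next
  case (Suc k)
  have "\<exists>b\<in>set xs. 2 \<le> b"
  proof (rule ccontr)
    assume "\<not> ?thesis"
    then have "(\<Sum>x\<leftarrow>xs. x) \<le> (\<Sum>x\<leftarrow>xs. 1)"
      by (intro sum_list_mono) (auto simp: not_le)
    then show False using Suc.hyps(2) Suc.prems(3) by (simp add: sum_list_triv)
  qed
  then obtain us b vs where xs: "xs = us @ b # vs" and "b \<in> B" "2 \<le> b"
    using Suc.prems(1) by (metis split_list subsetD)
  then obtain x y where "x \<in> B" "y \<in> B" "b = x + y" using split by blast
  define zs where "zs = us @ x # y # vs"
  have "set zs \<subseteq> B" "length zs = Suc (length xs)" "sum_list zs = sum_list xs"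
    using Suc.prems(1) \<open>x \<in> B\<close> \<open>y \<in> B\<close> unfolding zs_def xs \<open>b = x + y\<close> by auto
  then show ?case using Suc.hyps Suc.prems(3) Suc.hyps(1)[of zs] by auto
qed

lemma monomial_split:
  fixes g c f :: nat
  assumes "2 \<le> g" "1 \<le> c" "c < g" "2 \<le> c * g ^ f"
  obtains c1 f1 c2 f2 where "1 \<le> c1" "c1 < g" "1 \<le> c2" "c2 < g"
    and "c * g ^ f = c1 * g ^ f1 + c2 * g ^ f2"
proof (cases "2 \<le> c")
  case True
  have "c * g ^ f = (c - 1) * g ^ f + 1 * g ^ f"
    using True by (simp add: diff_mult_distrib)
  then show thesis using True assms(3) by (intro that[of "c - 1" 1]) auto
next
  case False
  with assms(2) have "c = 1" by simp
  then obtain e where "f = Suc e" using assms(4) by (cases f) auto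
  have "c * g ^ f = (g - 1) * g ^ e + 1 * g ^ e"
    using \<open>c = 1\<close> \<open>f = Suc e\<close> assms(1) by (simp add: diff_mult_distrib)
  then show thesis using assms(1) by (intro that[of "g - 1" 1]) auto
qed

lemma monomial_less_or_dvd: "(c::nat) < g \<Longrightarrow> c * g ^ f < g \<or> g dvd c * g ^ f"
  by (cases f) auto

lemma monomial_in_Union_A_g:
  "(\<Union>r\<in>R. W r) = UNIV \<Longrightarrow> 1 \<le> c \<Longrightarrow> c < g \<Longrightarrow> c * g ^ f \<in> (\<Union>r\<in>R. A_g g (W r))"
  using monomial_in_A_g by (metis UNIV_I UN_E UN_I)

lemma Union_A_g_split:
  assumes g: "2 \<le> g" and cover: "(\<Union>r\<in>R. W r) = UNIV"
    and m: "m \<in> (\<Union>r\<in>R. A_g g (W r))" and "2 \<le> m"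
  obtains x y where "x \<in> (\<Union>r\<in>R. A_g g (W r))" "y \<in> (\<Union>r\<in>R. A_g g (W r))" "m = x + y"
    and "x < g \<or> g dvd x" "y < g \<or> g dvd y"
proof -
  obtain r where r: "r \<in> R" "m \<in> A_g g (W r)" using m by blast
  then obtain F a where F: "finite F" "F \<noteq> {}" "F \<subseteq> W r" "\<forall>f\<in>F. 1 \<le> a f \<and> a f < g"
    and m_eq: "m = (\<Sum>f\<in>F. a f * g ^ f)"
    by (elim A_gE)
  define f0 where "f0 = Min F"
  have f0: "f0 \<in> F" unfolding f0_def using F by simp
  show thesis
  proof (cases "F = {f0}")
    case True
    then have "2 \<le> a f0 * g ^ f0" using \<open>2 \<le> m\<close> m_eq by simp
    then obtain c1 f1 c2 f2 where "1 \<le> c1" "c1 < g" "1 \<le> c2" "c2 < g"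
      and "a f0 * g ^ f0 = c1 * g ^ f1 + c2 * g ^ f2"
      using monomial_split g F(4) f0 by metis
    then show thesis
      using m_eq True that[of "c1 * g ^ f1" "c2 * g ^ f2"]
        monomial_in_Union_A_g[OF cover, of c1 g f1] monomial_in_Union_A_g[OF cover, of c2 g f2]
        monomial_less_or_dvd[of c1 g f1] monomial_less_or_dvd[of c2 g f2]
      by simp
  next
    case False
    let ?x = "a f0 * g ^ f0" and ?y = "\<Sum>f\<in>F - {f0}. a f * g ^ f"
    have "m = ?x + ?y" unfolding m_eq using F(1) f0 by (rule sum.remove)
    moreover have "?x \<in> A_g g (W r)" using f0 F by (intro monomial_in_A_g) auto
    moreover have "?x < g \<or> g dvd ?x" using f0 F(4) by (intro monomial_less_or_dvd) simp
    moreover have y: "?y \<in> A_g g (F - {f0})" using F f0 False by (intro A_gI) auto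
    then have "?y \<in> A_g g (W r)" using A_g_mono[of "F - {f0}" "W r"] F(3) by blast
    moreover have "0 \<notin> F - {f0}" using F(1) unfolding f0_def by (metis DiffE Min_le insertI1 le_zero_eq)
    then have "g dvd ?y" using y by (rule A_g_dvd[rotated])
    ultimately show thesis using that r(1) by blast
  qed
qed

text \<open>The shift condition lets \<open>n - (1 + g)\<close> be rewritten as \<open>g ^ t\<close> times an element of
  \<open>A_g g (W 0)\<close> whose digits avoid those of \<open>1 + g\<close>.\<close>

locale digit_partition =
  fixes g h t :: nat and W :: "nat \<Rightarrow> nat set"
  assumes base: "2 \<le> g" and power_le: "g ^ t \<le> h"
    and disjoint: "\<forall>r<h. \<forall>s<h. r \<noteq> s \<longrightarrow> W r \<inter> W s = {}"
    and cover: "(\<Union>r<h. W r) = UNIV"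
    and low_digits: "{0, 1} \<subseteq> W 0"
    and shift: "- W 0 \<subseteq> (+) t ` (W 0 - {0, 1})"
begin

abbreviation reduced_A :: "nat set" where
  "reduced_A \<equiv> (\<Union>r<h. A_g g (W r)) - {1 + g}"

lemma ne_one_plus_base: "x < g \<or> g dvd x \<Longrightarrow> x \<noteq> 1 + g"
  using base dvd_add_left_iff[of g g 1] by auto

lemma representation_if_class0_part_ne:
  assumes "restrict_digits g (W 0) n \<noteq> 1 + g"
  shows "\<exists>xs. length xs \<le> h \<and> set xs \<subseteq> reduced_A \<and> sum_list xs = n"
proof -
  define P where "P r = restrict_digits g (W r) n" for r
  define xs where "xs = map P (filter (\<lambda>r. P r \<noteq> 0) [0..<h])"
  have "sum_list xs = sum_list (map P [0..<h])"
    unfolding xs_def by (rule sum_list_map_filter) simp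
  also have "\<dots> = (\<Sum>r<h. P r)"
    by (simp add: sum_set_upt_conv_sum_list_nat[symmetric] atLeast0LessThan)
  also have "\<dots> = n"
    unfolding P_def using disjoint cover base by (simp add: sum_restrict_digits restrict_digits_UNIV)
  finally have "sum_list xs = n" .
  moreover have "P r \<in> reduced_A" if "r < h" "P r \<noteq> 0" for r
  proof -
    have "P r \<in> A_g g (W r)" using restrict_digits_in_A_g[of g "W r" n] base that(2) by (simp add: P_def)
    moreover have "P r \<noteq> 1 + g"
    proof (cases "r = 0")
      case False
      then have "0 \<notin> W r" using disjoint low_digits that(1) by blast
      then show ?thesis using \<open>P r \<in> A_g g (W r)\<close> A_g_dvd ne_one_plus_base by blast
    qed (use assms P_def in simp)
    ultimately show ?thesis using that(1) by blast
  qed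
  then have "set xs \<subseteq> reduced_A" unfolding xs_def by auto
  moreover have "length xs \<le> h" unfolding xs_def by (metis length_filter_le length_map length_upt minus_nat.diff_0)
  ultimately show ?thesis by blast
qed

lemma h_pos: "0 < h"
proof -
  have "0 < g ^ t" using base by simp
  then show ?thesis using power_le by linarith
qed

lemma representation_if_class0_part_eq:
  assumes "restrict_digits g (W 0) n = 1 + g" and "n \<noteq> 1 + g"
  shows "\<exists>xs. length xs \<le> h \<and> set xs \<subseteq> reduced_A \<and> sum_list xs = n"
proof -
  define Q where "Q = restrict_digits g (- W 0) n"
  have n_eq: "n = 1 + g + Q"
    using restrict_digits_Un[of "W 0" "- W 0" g n] restrict_digits_UNIV[OF base] assms(1)
    by (simp add: Q_def)
  then have "Q \<in> A_g g (- W 0)"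
    using restrict_digits_in_A_g[of g "- W 0" n] base assms(2) by (auto simp: Q_def)
  then have "Q \<in> A_g g ((+) t ` (W 0 - {0, 1}))" using A_g_mono[OF shift] by blast
  then obtain S where S: "S \<in> A_g g (W 0 - {0, 1})" and Q_eq: "Q = g ^ t * S"
    using A_g_image_plus by blast
  have "1 + g + S \<in> reduced_A"
  proof -
    have "1 + g + S \<in> A_g g ({0, 1} \<union> (W 0 - {0, 1}))"
      by (rule A_g_add[OF one_plus_base_in_A_g[OF base order.refl] S]) blast
    moreover have "{0, 1} \<union> (W 0 - {0, 1}) = W 0" using low_digits by blast
    moreover have "0 < S" using S by (rule A_g_pos)
    ultimately show ?thesis using h_pos by auto
  qed
  moreover have "S \<in> reduced_A"
  proof -
    have "S \<in> A_g g (W 0)" using S A_g_mono[of "W 0 - {0, 1}" "W 0" g] by blast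
    moreover have "g dvd S" using A_g_dvd[OF S] by simp
    ultimately show ?thesis using h_pos ne_one_plus_base by blast
  qed
  moreover obtain k where "g ^ t = Suc k" using base gr0_implies_Suc[of "g ^ t"] by auto
  ultimately show ?thesis using power_le n_eq Q_eq
    by (intro exI[of _ "(1 + g + S) # replicate k S"]) (auto simp: algebra_simps sum_list_replicate)
qed

lemma reduced_A_split:
  assumes "b \<in> reduced_A" "2 \<le> b"
  shows "\<exists>x\<in>reduced_A. \<exists>y\<in>reduced_A. b = x + y"
proof -
  obtain x y where "x \<in> (\<Union>r<h. A_g g (W r))" "y \<in> (\<Union>r<h. A_g g (W r))" "b = x + y"
    and "x < g \<or> g dvd x" "y < g \<or> g dvd y"
    using Union_A_g_split[OF base cover] assms by blast
  then show ?thesis using ne_one_plus_base by blast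
qed

lemma asymptotic_basis_reduced_A: "asymptotic_basis h reduced_A"
  unfolding asymptotic_basis_iff
proof (intro exI[of _ "h + g + 1"] allI impI)
  fix n assume n: "h + g + 1 \<le> n"
  have "\<exists>xs. length xs \<le> h \<and> set xs \<subseteq> reduced_A \<and> sum_list xs = n"
  proof (cases "restrict_digits g (W 0) n = 1 + g")
    case True
    then show ?thesis using n h_pos by (intro representation_if_class0_part_eq) auto
  qed (use representation_if_class0_part_ne in blast)
  then obtain xs where "length xs \<le> h" "set xs \<subseteq> reduced_A" "sum_list xs = n" by blast
  then show "\<exists>xs. length xs = h \<and> set xs \<subseteq> reduced_A \<and> sum_list xs = n"
    using extend_sum_list_length[OF reduced_A_split, of xs h] n by auto
qed

end

lemma power_le_if_le_ln_div:
  fixes g h t :: nat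
  assumes "1 < g" "0 < t" "real t \<le> ln (real h) / ln (real g)"
  shows "g ^ t \<le> h"
proof -
  have "0 < h"
  proof (rule ccontr)
    assume "\<not> 0 < h"
    then show False using assms(2,3) by simp
  qed
  then have "real g powr real t \<le> real h"
    using assms le_log_iff[of "real g" "real h" "real t"] by (simp add: log_def)
  then show ?thesis using assms(1) by (simp add: powr_realpow flip: of_nat_power)
qed

lemma div_eq_iff_mem_block:
  fixes f k t :: nat
  assumes "0 < t"
  shows "f div t = k \<longleftrightarrow> f \<in> {t * k..<t * k + t}"
proof -
  have "f div t = k \<longleftrightarrow> k \<le> f div t \<and> f div t < Suc k" by auto
  also have "\<dots> \<longleftrightarrow> k * t \<le> f \<and> f < Suc k * t"
    using assms by (simp only: less_eq_div_iff_mult_less_eq div_less_iff_less_mult)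
  finally show ?thesis by (simp add: algebra_simps)
qed

lemma union_of_long_intervals_blocks:
  assumes "0 < t" "infinite K"
  shows "union_of_long_intervals t {f. f div t \<in> K}"
proof -
  define block where "block k = {t * k..<t * k + t}" for k
  have mem_block: "f \<in> block k \<longleftrightarrow> f div t = k" for f k
    unfolding block_def using div_eq_iff_mem_block[OF assms(1)] by simp
  show ?thesis unfolding union_of_long_intervals_def
  proof (intro exI[of _ "block ` K"] conjI)
    have "inj_on block K"
    proof (rule inj_onI)
      fix k k' assume "block k = block k'"
      moreover have "t * k \<in> block k" using mem_block assms(1) by simp
      ultimately have "t * k \<in> block k'" by simp
      then show "k = k'" using mem_block assms(1) by simp
    qed
    then show "infinite (block ` K)" using assms(2) finite_imageD by blast
    have "f \<in> \<Union> (block ` K) \<longleftrightarrow> f div t \<in> K" for f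
    proof
      assume "f \<in> \<Union> (block ` K)"
      then obtain k where "k \<in> K" "f \<in> block k" by blast
      then show "f div t \<in> K" using mem_block by simp
    next
      assume "f div t \<in> K"
      moreover have "f \<in> block (f div t)" using mem_block by simp
      ultimately show "f \<in> \<Union> (block ` K)" by blast
    qed
    then show "\<Union> (block ` K) = {f. f div t \<in> K}" by blast
    have "\<exists>a l. t \<le> l \<and> block k = {a..<a + l}" for k
      unfolding block_def by (intro exI[of _ "t * k"] exI[of _ t]) simp
    then show "\<forall>I\<in>block ` K. \<exists>a l. t \<le> l \<and> I = {a..<a + l}" by blast
    have "block k \<inter> block k' = {}" if "k \<noteq> k'" for k k'
      using that by (auto simp: mem_block)
    then show "\<forall>I\<in>block ` K. \<forall>J\<in>block ` K. I \<noteq> J \<longrightarrow> I \<inter> J = {}" by (metis imageE)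
  qed
qed

definition block_label :: "nat \<Rightarrow> nat \<Rightarrow> nat" where
  "block_label h k = (if odd k \<and> 3 \<le> k then 1 + (k - 3) div 2 mod (h - 1) else 0)"

definition block_partition :: "nat \<Rightarrow> nat \<Rightarrow> nat \<Rightarrow> nat set" where
  "block_partition h t r = {f. block_label h (f div t) = r}"

lemma block_label_less:
  assumes "2 \<le> h"
  shows "block_label h k < h"
proof -
  have "1 + (k - 3) div 2 mod (h - 1) < h"
    using mod_less_divisor[of "h - 1" "(k - 3) div 2"] assms by linarith
  then show ?thesis using assms by (simp add: block_label_def)
qed

lemma block_label_nonzero:
  "block_label h k \<noteq> 0 \<Longrightarrow> 3 \<le> k \<and> block_label h (k - 1) = 0"
  unfolding block_label_def by (auto split: if_splits)

lemma infinite_block_label: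
  assumes "2 \<le> h" "r < h"
  shows "infinite {k. block_label h k = r}"
  unfolding infinite_nat_iff_unbounded_le
proof
  fix m
  show "\<exists>k\<ge>m. k \<in> {k. block_label h k = r}"
  proof (cases "r = 0")
    case True
    then show ?thesis by (intro exI[of _ "2 * m"]) (simp add: block_label_def)
  next
    case False
    define j where "j = m * (h - 1) + (r - 1)"
    have "j mod (h - 1) = (r - 1) mod (h - 1)" unfolding j_def by (rule mod_mult_self3)
    also have "\<dots> = r - 1" using assms False by simp
    finally have "block_label h (3 + 2 * j) = r" unfolding block_label_def using False by simp
    moreover have "1 \<le> h - 1" using assms(1) by simp
    then have "m \<le> m * (h - 1)" by (metis mult.right_neutral mult_le_mono2)
    then have "m \<le> j" unfolding j_def using trans_le_add1 by blast
    then have "m \<le> 3 + 2 * j" by linarith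
    ultimately show ?thesis by blast
  qed
qed

lemma two_le_if_power_le: "2 \<le> g \<Longrightarrow> 0 < t \<Longrightarrow> g ^ t \<le> h \<Longrightarrow> 2 \<le> (h::nat)"
  using power_increasing[of 1 t g] by simp

lemma union_of_long_intervals_block_partition:
  "2 \<le> h \<Longrightarrow> 0 < t \<Longrightarrow> r < h \<Longrightarrow> union_of_long_intervals t (block_partition h t r)"
  unfolding block_partition_def
  using union_of_long_intervals_blocks[of t "{k. block_label h k = r}"] infinite_block_label
  by simp

lemma digit_partition_block_partition:
  assumes g: "2 \<le> g" and t: "0 < t" and hg: "g ^ t \<le> h"
  shows "digit_partition g h t (block_partition h t)"
proof
  have h: "2 \<le> h" using g t hg by (rule two_le_if_power_le)
  show "\<forall>r<h. \<forall>s<h. r \<noteq> s \<longrightarrow> block_partition h t r \<inter> block_partition h t s = {}"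
    by (auto simp: block_partition_def)
  show "(\<Union>r<h. block_partition h t r) = UNIV"
    using block_label_less[OF h] by (auto simp: block_partition_def)
  have "\<not> 3 \<le> 1 div t" using div_le_dividend[of 1 t] by linarith
  then show "{0, 1} \<subseteq> block_partition h t 0"
    by (auto simp: block_partition_def block_label_def)
  show "- block_partition h t 0 \<subseteq> (+) t ` (block_partition h t 0 - {0, 1})"
  proof
    fix f assume "f \<in> - block_partition h t 0"
    then have "block_label h (f div t) \<noteq> 0" by (simp add: block_partition_def)
    then have k: "3 \<le> f div t" "block_label h (f div t - 1) = 0"
      using block_label_nonzero by blast+
    have "3 * t \<le> f div t * t" using k(1) by simp
    also have "\<dots> \<le> f" by simp
    finally have "3 * t \<le> f" .
    then have "f div t = Suc ((f - t) div t)" using t le_div_geq by simp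
    then have "f - t \<in> block_partition h t 0" using k(2) by (simp add: block_partition_def)
    moreover have "2 \<le> f - t" using \<open>3 * t \<le> f\<close> t by simp
    ultimately show "f \<in> (+) t ` (block_partition h t 0 - {0, 1})"
      using \<open>3 * t \<le> f\<close> by (intro image_eqI[of _ _ "f - t"]) auto
  qed
qed (use assms in auto)

theorem theorem1:
  fixes g h t :: nat
  assumes "g \<ge> 2" and "2 \<le> t" and "real t \<le> ln (real h) / ln (real g)"
  shows "\<exists>W :: nat \<Rightarrow> nat set.
           (\<forall>r<h. \<forall>s<h. r \<noteq> s \<longrightarrow> W r \<inter> W s = {}) \<and>
           (\<Union>r<h. W r) = UNIV \<and>
           (\<forall>r<h. union_of_long_intervals t (W r)) \<and>
           \<not> minimal_asymptotic_basis h (\<Union>r<h. A_g g (W r))"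
proof -
  have t: "0 < t" using assms(2) by simp
  have hg: "g ^ t \<le> h" using power_le_if_le_ln_div assms t by simp
  interpret digit_partition g h t "block_partition h t"
    using digit_partition_block_partition assms(1) t hg .
  have "2 \<le> h" using assms(1) t hg by (rule two_le_if_power_le)
  then have long: "\<forall>r<h. union_of_long_intervals t (block_partition h t r)"
    using union_of_long_intervals_block_partition t by blast
  have "1 + g \<in> (\<Union>r<h. A_g g (block_partition h t r))"
    using one_plus_base_in_A_g[OF base low_digits] h_pos by blast
  then have "reduced_A \<subset> (\<Union>r<h. A_g g (block_partition h t r))" by blast
  then have "\<not> minimal_asymptotic_basis h (\<Union>r<h. A_g g (block_partition h t r))"
    using asymptotic_basis_reduced_A unfolding minimal_asymptotic_basis_def by blast
  then show ?thesis using disjoint cover long by blast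
qed

end
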